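(* Let $p\ge 1$, let $(X,Y)$ be random with $Y\in\{0,1\}$, let $f:\mathcal{X}\to[0,1]$ be any model and let $\mathcal{B}=\{I_1,\dots,I_B\}$ be any binning scheme. Then $\ell_p\text{-CE}(f_{\mathcal{B}})\le \ell_p\text{-CE}(f)$.
   Context: For $h:\mathcal{X}\to[0,1]$, $\ell_p\text{-CE}(h)=\big(\mathbb{E}\big[|h(X)-\mathbb{E}[Y\mid h(X)]|^p\big]\big)^{1/p}$. A binning scheme of size $B$ is a set of $B$ intervals $I_1,\dots,I_B$ partitioning $[0,1]$; for $z\in[0,1]$, $\beta(z)$ is the index $j$ with $z\in I_j$. The binned model is $f_{\mathcal{B}}(x)=\mathbb{E}\big[f(X)\mid f(X)\in I_{\beta(f(x))}\big]$. *)

theory Defs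
  imports "HOL-Probability.Probability"
begin

definition condexp_given :: "'a measure \<Rightarrow> ('a \<Rightarrow> 'x) \<Rightarrow> ('a \<Rightarrow> real) \<Rightarrow> ('x \<Rightarrow> real) \<Rightarrow> 'a \<Rightarrow> real" where
  "condexp_given M X Y h = real_cond_exp M (vimage_algebra (space M) (\<lambda>\<omega>. h (X \<omega>)) borel) Y"

definition lp_CE :: "'a measure \<Rightarrow> ('a \<Rightarrow> 'x) \<Rightarrow> ('a \<Rightarrow> real) \<Rightarrow> real \<Rightarrow> ('x \<Rightarrow> real) \<Rightarrow> real" where
  "lp_CE M X Y p h =
     (\<integral>\<omega>. \<bar>h (X \<omega>) - condexp_given M X Y h \<omega>\<bar> powr p \<partial>M) powr (1 / p)"

definition binning_scheme :: "nat \<Rightarrow> (nat \<Rightarrow> real set) \<Rightarrow> bool" where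
  "binning_scheme B I \<longleftrightarrow>
     (\<forall>j<B. is_interval (I j)) \<and>
     (\<forall>j<B. \<forall>k<B. j \<noteq> k \<longrightarrow> I j \<inter> I k = {}) \<and>
     (\<Union>j<B. I j) = {0..1}"

definition bin_index :: "nat \<Rightarrow> (nat \<Rightarrow> real set) \<Rightarrow> real \<Rightarrow> nat" where
  "bin_index B I z = (THE j. j < B \<and> z \<in> I j)"

definition binned_model :: "'a measure \<Rightarrow> ('a \<Rightarrow> 'x) \<Rightarrow> ('x \<Rightarrow> real) \<Rightarrow> nat \<Rightarrow> (nat \<Rightarrow> real set) \<Rightarrow> 'x \<Rightarrow> real" where
  "binned_model M X f B I x =
     (let E = {\<omega> \<in> space M. f (X \<omega>) \<in> I (bin_index B I (f x))}
      in (\<integral>\<omega>. f (X \<omega>) * indicator E \<omega> \<partial>M) / measure M E)"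

end

theory Submission
  imports Defs
begin

(* Let G and H be the \<sigma>-algebras generated by f(X) and by f_B(X). Since f_B(X) only depends
   on the bin of f(X), H \<subseteq> G; since f_B averages f(X) over each bin, f_B(X) = E[f(X) | H].
   By the tower property E[Y | H] = E[E[Y | G] | H], hence
     f_B(X) - E[Y | f_B(X)] = E[f(X) - E[Y | f(X)] | H],
   and conditional Jensen for the convex function |.|^p bounds the p-th moment of the left
   side by that of f(X) - E[Y | f(X)]. *)

lemma convex_on_powr_nonneg:
  fixes p :: real
  assumes "p \<ge> 1"
  shows "convex_on {0..} (\<lambda>x. x powr p)"
proof (rule convex_onI)
  fix t a b :: real
  assume t: "0 < t" "t < 1" and ab: "a \<in> {0..}" "b \<in> {0..}"
  have scaled: "(s * x) powr p \<le> s * x powr p" if "0 \<le> s" "s \<le> 1" "0 \<le> x" for s x :: real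
  proof -
    have "s powr p \<le> s powr 1"
      using that assms by (intro powr_mono') auto
    then show ?thesis
      using that by (simp add: powr_mult mult_right_mono)
  qed
  consider "a = 0" | "b = 0" | "a > 0" "b > 0"
    using ab by fastforce
  then show "((1 - t) *\<^sub>R a + t *\<^sub>R b) powr p \<le> (1 - t) * a powr p + t * b powr p"
  proof cases
    case 1
    then show ?thesis using scaled[of t b] t ab by simp
  next
    case 2
    then show ?thesis using scaled[of "1 - t" a] t ab by simp
  next
    case 3
    then show ?thesis using convex_onD[OF powr_convex[OF assms], of t a b] t by simp
  qed
qed (simp add: convex_real_interval)

lemma convex_on_abs_powr:
  fixes p :: real
  assumes "p \<ge> 1"
  shows "convex_on UNIV (\<lambda>x. \<bar>x\<bar> powr p)"
proof (rule convex_onI)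
  fix t x y :: real
  assume t: "0 < t" "t < 1"
  have "\<bar>(1 - t) * x + t * y\<bar> powr p \<le> ((1 - t) * \<bar>x\<bar> + t * \<bar>y\<bar>) powr p"
    using t assms abs_triangle_ineq[of "(1 - t) * x" "t * y"]
    by (intro powr_mono2) (auto simp: abs_mult)
  also have "\<dots> \<le> (1 - t) * \<bar>x\<bar> powr p + t * \<bar>y\<bar> powr p"
    using convex_onD[OF convex_on_powr_nonneg[OF assms], of t "\<bar>x\<bar>" "\<bar>y\<bar>"] t by simp
  finally show "\<bar>(1 - t) *\<^sub>R x + t *\<^sub>R y\<bar> powr p \<le> (1 - t) * \<bar>x\<bar> powr p + t * \<bar>y\<bar> powr p"
    by simp
qed simp

lemma subalgebra_vimage_algebra:
  assumes "g \<in> measurable M N"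
  shows "subalgebra M (vimage_algebra (space M) g N)"
  unfolding subalgebra_def using sets_image_in_sets[OF refl assms] by simp

context sigma_finite_subalgebra
begin

lemma integral_abs_powr_real_cond_exp_le:
  fixes p :: real
  assumes Z: "integrable M Z" "integrable M (\<lambda>\<omega>. \<bar>Z \<omega>\<bar> powr p)" and p: "p \<ge> 1"
  shows "(\<integral>\<omega>. \<bar>real_cond_exp M F Z \<omega>\<bar> powr p \<partial>M) \<le> (\<integral>\<omega>. \<bar>Z \<omega>\<bar> powr p \<partial>M)"
proof -
  have q: "convex_on UNIV (\<lambda>x::real. \<bar>x\<bar> powr p)" "(\<lambda>x::real. \<bar>x\<bar> powr p) \<in> borel_measurable borel"
    using convex_on_abs_powr[OF p] by auto
  have "(\<integral>\<omega>. \<bar>real_cond_exp M F Z \<omega>\<bar> powr p \<partial>M)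
      \<le> (\<integral>\<omega>. real_cond_exp M F (\<lambda>\<omega>. \<bar>Z \<omega>\<bar> powr p) \<omega> \<partial>M)"
  proof (rule integral_mono_AE)
    show "integrable M (\<lambda>\<omega>. \<bar>real_cond_exp M F Z \<omega>\<bar> powr p)"
      by (rule integrable_convex_cond_exp[OF Z(1) _ _ Z(2) q]) auto
    show "AE \<omega> in M. \<bar>real_cond_exp M F Z \<omega>\<bar> powr p \<le> real_cond_exp M F (\<lambda>\<omega>. \<bar>Z \<omega>\<bar> powr p) \<omega>"
      by (rule real_cond_exp_jensens_inequality(2)[OF Z(1) _ _ Z(2) q]) auto
  qed (use Z(2) in auto)
  also have "\<dots> = (\<integral>\<omega>. \<bar>Z \<omega>\<bar> powr p \<partial>M)"
    using real_cond_exp_int(2)[OF Z(2)] .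
  finally show ?thesis .
qed

lemma integral_abs_powr_diff_real_cond_exp_coarser_le:
  fixes p :: real
  assumes G: "subalgebra M G" "subalgebra G F"
    and int: "integrable M Y" "integrable M u" "integrable M (\<lambda>\<omega>. \<bar>u \<omega> - real_cond_exp M G Y \<omega>\<bar> powr p)"
    and v: "v \<in> borel_measurable M" "AE \<omega> in M. real_cond_exp M F u \<omega> = v \<omega>"
    and p: "p \<ge> 1"
  shows "(\<integral>\<omega>. \<bar>v \<omega> - real_cond_exp M F Y \<omega>\<bar> powr p \<partial>M)
       \<le> (\<integral>\<omega>. \<bar>u \<omega> - real_cond_exp M G Y \<omega>\<bar> powr p \<partial>M)"
proof -
  interpret G: sigma_finite_subalgebra M G
    using nested_subalg_is_sigma_finite[OF G] .
  define Z where "Z = (\<lambda>\<omega>. u \<omega> - real_cond_exp M G Y \<omega>)"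
  have Z: "integrable M Z"
    unfolding Z_def using int(2) G.real_cond_exp_int(1)[OF int(1)] by (rule Bochner_Integration.integrable_diff)
  have "AE \<omega> in M. real_cond_exp M F Z \<omega> = v \<omega> - real_cond_exp M F Y \<omega>"
    using real_cond_exp_diff[OF int(2) G.real_cond_exp_int(1)[OF int(1)]]
      real_cond_exp_nested_subalg[OF G int(1)] v(2)
    unfolding Z_def by eventually_elim simp
  then have "(\<integral>\<omega>. \<bar>v \<omega> - real_cond_exp M F Y \<omega>\<bar> powr p \<partial>M) = (\<integral>\<omega>. \<bar>real_cond_exp M F Z \<omega>\<bar> powr p \<partial>M)"
    using v(1) by (intro integral_cong_AE) auto
  also have "\<dots> \<le> (\<integral>\<omega>. \<bar>Z \<omega>\<bar> powr p \<partial>M)"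
    using integral_abs_powr_real_cond_exp_le[OF Z _ p] int(3) unfolding Z_def by simp
  finally show ?thesis unfolding Z_def .
qed

end

lemma (in finite_measure_subalgebra) integrable_abs_powr_diff_real_cond_exp:
  fixes p :: real
  assumes u: "u \<in> borel_measurable M" "\<And>\<omega>. \<omega> \<in> space M \<Longrightarrow> u \<omega> \<in> {0..1}"
    and Y: "integrable M Y" "\<And>\<omega>. \<omega> \<in> space M \<Longrightarrow> Y \<omega> \<in> {0..1}"
    and p: "p \<ge> 0"
  shows "integrable M (\<lambda>\<omega>. \<bar>u \<omega> - real_cond_exp M F Y \<omega>\<bar> powr p)"
proof (rule integrable_const_bound[where B=1])
  have "AE \<omega> in M. 0 \<le> real_cond_exp M F Y \<omega>"
    using Y(2) by (intro real_cond_exp_ge_c[OF Y(1)] AE_I2) auto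
  moreover have "AE \<omega> in M. real_cond_exp M F Y \<omega> \<le> 1"
    using Y(2) by (intro real_cond_exp_le_c[OF Y(1)] AE_I2) auto
  ultimately show "AE \<omega> in M. norm (\<bar>u \<omega> - real_cond_exp M F Y \<omega>\<bar> powr p) \<le> 1"
    using AE_space
  proof eventually_elim
    case (elim \<omega>)
    then have "\<bar>u \<omega> - real_cond_exp M F Y \<omega>\<bar> \<le> 1"
      using u(2)[of \<omega>] by auto
    then show ?case
      using p by (simp add: powr_le1)
  qed
qed (use u(1) in simp)

lemma lp_CE_le_of_real_cond_exp:
  fixes p :: real
  assumes "prob_space M"
    and Y: "Y \<in> borel_measurable M" "\<And>\<omega>. \<omega> \<in> space M \<Longrightarrow> Y \<omega> \<in> {0..1}"
    and f: "(\<lambda>\<omega>. f (X \<omega>)) \<in> borel_measurable M" "\<And>\<omega>. \<omega> \<in> space M \<Longrightarrow> f (X \<omega>) \<in> {0..1}"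
    and coarser: "sets (vimage_algebra (space M) (\<lambda>\<omega>. h (X \<omega>)) borel)
                  \<subseteq> sets (vimage_algebra (space M) (\<lambda>\<omega>. f (X \<omega>)) borel)"
    and h_cond_exp: "AE \<omega> in M. real_cond_exp M (vimage_algebra (space M) (\<lambda>\<omega>. h (X \<omega>)) borel) (\<lambda>\<omega>. f (X \<omega>)) \<omega> = h (X \<omega>)"
    and p: "p \<ge> 1"
  shows "lp_CE M X Y p h \<le> lp_CE M X Y p f"
proof -
  interpret prob_space M by fact
  define G where "G = vimage_algebra (space M) (\<lambda>\<omega>. f (X \<omega>)) borel"
  define F where "F = vimage_algebra (space M) (\<lambda>\<omega>. h (X \<omega>)) borel"
  have MG: "subalgebra M G"
    unfolding G_def by (rule subalgebra_vimage_algebra[OF f(1)])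
  have GF: "subalgebra G F"
    using coarser unfolding subalgebra_def F_def G_def by simp
  have MF: "subalgebra M F"
    using MG GF unfolding subalgebra_def by auto
  interpret G: finite_measure_subalgebra M G
    using MG by unfold_locales
  interpret F: finite_measure_subalgebra M F
    using MF by unfold_locales
  have "(\<lambda>\<omega>. h (X \<omega>)) \<in> borel_measurable F"
    unfolding F_def by (rule measurable_vimage_algebra1) simp
  then have h_meas: "(\<lambda>\<omega>. h (X \<omega>)) \<in> borel_measurable M"
    by (rule measurable_from_subalg[OF MF])
  have Y_int: "integrable M Y"
    using Y by (intro integrable_const_bound[where B=1] AE_I2) auto
  have f_int: "integrable M (\<lambda>\<omega>. f (X \<omega>))"
    using f by (intro integrable_const_bound[where B=1] AE_I2) auto
  have gap_int: "integrable M (\<lambda>\<omega>. \<bar>f (X \<omega>) - real_cond_exp M G Y \<omega>\<bar> powr p)"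
    using G.integrable_abs_powr_diff_real_cond_exp[OF f Y_int Y(2)] p by simp
  have "(\<integral>\<omega>. \<bar>h (X \<omega>) - real_cond_exp M F Y \<omega>\<bar> powr p \<partial>M)
      \<le> (\<integral>\<omega>. \<bar>f (X \<omega>) - real_cond_exp M G Y \<omega>\<bar> powr p \<partial>M)"
    using F.integral_abs_powr_diff_real_cond_exp_coarser_le[OF MG GF Y_int f_int gap_int h_meas _ p] h_cond_exp
    unfolding F_def by blast
  then show ?thesis
    unfolding lp_CE_def condexp_given_def F_def[symmetric] G_def[symmetric]
    using p by (intro powr_mono2) auto
qed

(* The conditional mean E[u | E]; junk value 0 when E is a null set. *)
definition average_on :: "'a measure \<Rightarrow> ('a \<Rightarrow> real) \<Rightarrow> 'a set \<Rightarrow> real" where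
  "average_on M u E = (\<integral>\<omega>. u \<omega> * indicator E \<omega> \<partial>M) / measure M E"

lemma (in finite_measure) set_integral_eq_average_on_mult:
  assumes "E \<in> sets M"
  shows "(LINT \<omega>:E|M. u \<omega>) = average_on M u E * measure M E"
proof (cases "measure M E = 0")
  case True
  then have "AE \<omega> in M. indicator E \<omega> *\<^sub>R u \<omega> = 0"
    using AE_not_in[of E M] assms by (auto simp: emeasure_eq_measure null_sets_def elim: eventually_mono)
  then show ?thesis
    unfolding set_lebesgue_integral_def using True by (simp add: integral_eq_zero_AE)
next
  case False
  then show ?thesis
    unfolding set_lebesgue_integral_def average_on_def by (simp add: mult.commute)
qed

lemma sets_level_set_count_space:
  assumes "\<beta> \<in> measurable M (count_space UNIV)"
  shows "{\<omega> \<in> space M. P (\<beta> \<omega>)} \<in> sets M"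
proof -
  have "{\<omega> \<in> space M. P (\<beta> \<omega>)} = \<beta> -` {j. P j} \<inter> space M"
    by auto
  then show ?thesis
    using measurable_sets[OF assms, of "{j. P j}"] by simp
qed

lemma set_integral_level_sets_sum:
  fixes w :: "'a \<Rightarrow> real"
  assumes "\<beta> \<in> measurable M (count_space UNIV)" "finite K" "integrable M w"
  shows "(LINT \<omega>:{\<omega> \<in> space M. \<beta> \<omega> \<in> K}|M. w \<omega>) = (\<Sum>j\<in>K. LINT \<omega>:{\<omega> \<in> space M. \<beta> \<omega> = j}|M. w \<omega>)"
proof -
  have "{\<omega> \<in> space M. \<beta> \<omega> \<in> K} = (\<Union>j\<in>K. {\<omega> \<in> space M. \<beta> \<omega> = j})"
    by auto
  moreover have "disjoint_family_on (\<lambda>j. {\<omega> \<in> space M. \<beta> \<omega> = j}) K"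
    unfolding disjoint_family_on_def by auto
  ultimately show ?thesis
    using assms sets_level_set_count_space[OF assms(1)]
    by (auto simp: set_integrable_def mult.commute
        intro!: set_integral_finite_Union integrable_real_mult_indicator)
qed

lemma (in finite_measure) integrable_comp_finite_range:
  assumes "\<beta> \<in> measurable M (count_space UNIV)" "finite (\<beta> ` space M)"
  shows "integrable M (\<lambda>\<omega>. c (\<beta> \<omega>) :: real)"
proof (rule integrable_const_bound[where B="Max ((\<lambda>j. \<bar>c j\<bar>) ` \<beta> ` space M)"])
  show "AE \<omega> in M. norm (c (\<beta> \<omega>)) \<le> Max ((\<lambda>j. \<bar>c j\<bar>) ` \<beta> ` space M)"
    using assms(2) by (intro AE_I2) (auto intro: Max_ge)
qed (rule measurable_compose[OF assms(1) borel_measurable_count_space])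

text \<open>Each A in the \<sigma>-algebra generated by g is a union of level sets of \<beta>, on each of which
  u and g have the same integral.\<close>
lemma (in finite_measure) real_cond_exp_eq_average_on_level_sets:
  fixes \<beta> :: "'a \<Rightarrow> 'b" and u g :: "'a \<Rightarrow> real"
  assumes \<beta>: "\<beta> \<in> measurable M (count_space UNIV)" "finite (\<beta> ` space M)"
    and u: "integrable M u"
    and g: "\<And>\<omega>. \<omega> \<in> space M \<Longrightarrow> g \<omega> = average_on M u {\<omega>' \<in> space M. \<beta> \<omega>' = \<beta> \<omega>}"
  shows "AE \<omega> in M. real_cond_exp M (vimage_algebra (space M) g borel) u \<omega> = g \<omega>"
proof -
  define L where "L j = {\<omega> \<in> space M. \<beta> \<omega> = j}" for j
  define c where "c j = average_on M u (L j)" for j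
  have g_c: "g \<omega> = c (\<beta> \<omega>)" if "\<omega> \<in> space M" for \<omega>
    unfolding c_def L_def using g[OF that] .
  have L: "L j \<in> sets M" for j
    unfolding L_def using sets_level_set_count_space[OF \<beta>(1)] .
  have g_int: "integrable M g"
    using integrable_comp_finite_range[OF \<beta>, of c] Bochner_Integration.integrable_cong[of M M g "\<lambda>\<omega>. c (\<beta> \<omega>)"] g_c
    by simp
  define F where "F = vimage_algebra (space M) g borel"
  interpret F: finite_measure_subalgebra M F
    using subalgebra_vimage_algebra[OF borel_measurable_integrable[OF g_int]] unfolding F_def
    by unfold_locales
  have set_integral_level: "(LINT \<omega>:L j|M. u \<omega>) = (LINT \<omega>:L j|M. g \<omega>)" for j
  proof -
    have "(LINT \<omega>:L j|M. g \<omega>) = (LINT \<omega>:L j|M. c j)"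
      by (rule set_lebesgue_integral_cong[OF L]) (simp add: L_def g_c)
    also have "\<dots> = c j * measure M (L j)"
      using L by (simp add: set_integral_const)
    finally show ?thesis
      unfolding c_def set_integral_eq_average_on_mult[OF L, where u=u] by simp
  qed
  have "AE \<omega> in M. real_cond_exp M F u \<omega> = g \<omega>"
  proof (rule F.real_cond_exp_charact[OF _ u g_int])
    show "g \<in> borel_measurable F"
      unfolding F_def by (rule measurable_vimage_algebra1) simp
    fix A assume "A \<in> sets F"
    then obtain C where "A = g -` C \<inter> space M"
      unfolding F_def by (auto simp: sets_vimage_algebra2)
    define K where "K = {j \<in> \<beta> ` space M. c j \<in> C}"
    have "finite K"
      using \<beta>(2) unfolding K_def by simp
    have A: "A = {\<omega> \<in> space M. \<beta> \<omega> \<in> K}"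
      using \<open>A = g -` C \<inter> space M\<close> unfolding K_def by (auto simp: g_c)
    show "(LINT \<omega>:A|M. u \<omega>) = (LINT \<omega>:A|M. g \<omega>)"
      unfolding A set_integral_level_sets_sum[OF \<beta>(1) \<open>finite K\<close> u]
        set_integral_level_sets_sum[OF \<beta>(1) \<open>finite K\<close> g_int]
      using set_integral_level unfolding L_def by simp
  qed
  then show ?thesis
    unfolding F_def .
qed

lemma bin_index_spec:
  assumes "binning_scheme B I" "z \<in> {0..1}"
  shows "bin_index B I z < B" "z \<in> I (bin_index B I z)"
proof -
  have "\<exists>!j. j < B \<and> z \<in> I j"
    using assms unfolding binning_scheme_def by blast
  then have "bin_index B I z < B \<and> z \<in> I (bin_index B I z)"
    unfolding bin_index_def by (rule theI')
  then show "bin_index B I z < B" "z \<in> I (bin_index B I z)"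
    by auto
qed

lemma bin_index_eq_iff:
  assumes "binning_scheme B I" "z \<in> {0..1}" "j < B"
  shows "bin_index B I z = j \<longleftrightarrow> z \<in> I j"
  using bin_index_spec[OF assms(1,2)] assms unfolding binning_scheme_def by blast

lemma measurable_bin_index:
  assumes "binning_scheme B I" "h \<in> borel_measurable N" "\<And>\<omega>. \<omega> \<in> space N \<Longrightarrow> h \<omega> \<in> {0..1}"
  shows "(\<lambda>\<omega>. bin_index B I (h \<omega>)) \<in> measurable N (count_space UNIV)"
  unfolding measurable_count_space_eq2_countable
proof (intro conjI ballI)
  fix j :: nat
  have "(\<lambda>\<omega>. bin_index B I (h \<omega>)) -` {j} \<inter> space N = (if j < B then h -` I j \<inter> space N else {})"
    using assms(3) bin_index_spec[OF assms(1)] bin_index_eq_iff[OF assms(1)] by auto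
  moreover have "I j \<in> sets borel" if "j < B"
    using assms(1) that unfolding binning_scheme_def by (auto intro: real_interval_borel_measurable)
  ultimately show "(\<lambda>\<omega>. bin_index B I (h \<omega>)) -` {j} \<inter> space N \<in> sets N"
    using measurable_sets[OF assms(2)] by auto
qed simp

lemma binned_model_eq_average_on:
  assumes "binning_scheme B I" "\<And>\<omega>. \<omega> \<in> space M \<Longrightarrow> f (X \<omega>) \<in> {0..1}" "\<omega> \<in> space M"
  shows "binned_model M X f B I (X \<omega>)
       = average_on M (\<lambda>\<omega>. f (X \<omega>)) {\<omega>' \<in> space M. bin_index B I (f (X \<omega>')) = bin_index B I (f (X \<omega>))}"
proof -
  have "{\<omega>' \<in> space M. f (X \<omega>') \<in> I (bin_index B I (f (X \<omega>)))}
      = {\<omega>' \<in> space M. bin_index B I (f (X \<omega>')) = bin_index B I (f (X \<omega>))}"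
    using assms bin_index_spec[OF assms(1)] bin_index_eq_iff[OF assms(1)] by auto
  then show ?thesis
    unfolding binned_model_def average_on_def Let_def by simp
qed

lemma sets_vimage_algebra_binned_model_subset:
  assumes "binning_scheme B I" "\<And>\<omega>. \<omega> \<in> space M \<Longrightarrow> f (X \<omega>) \<in> {0..1}"
  shows "sets (vimage_algebra (space M) (\<lambda>\<omega>. binned_model M X f B I (X \<omega>)) borel)
       \<subseteq> sets (vimage_algebra (space M) (\<lambda>\<omega>. f (X \<omega>)) borel)"
    (is "_ \<subseteq> sets ?G")
proof (rule sets_image_in_sets)
  have "(\<lambda>\<omega>. f (X \<omega>)) \<in> borel_measurable ?G"
    by (rule measurable_vimage_algebra1) simp
  then have "(\<lambda>\<omega>. bin_index B I (f (X \<omega>))) \<in> measurable ?G (count_space UNIV)"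
    using assms by (intro measurable_bin_index) auto
  then have "(\<lambda>\<omega>. average_on M (\<lambda>\<omega>. f (X \<omega>))
      {\<omega>' \<in> space M. bin_index B I (f (X \<omega>')) = bin_index B I (f (X \<omega>))}) \<in> borel_measurable ?G"
    by (rule measurable_compose[OF _ borel_measurable_count_space])
  then show "(\<lambda>\<omega>. binned_model M X f B I (X \<omega>)) \<in> borel_measurable ?G"
    by (subst measurable_cong) (auto simp: binned_model_eq_average_on[where f=f and X=X, OF assms])
qed simp

lemma (in finite_measure) real_cond_exp_binned_model:
  assumes "binning_scheme B I"
    and f: "(\<lambda>\<omega>. f (X \<omega>)) \<in> borel_measurable M" "\<And>\<omega>. \<omega> \<in> space M \<Longrightarrow> f (X \<omega>) \<in> {0..1}"
  shows "AE \<omega> in M. real_cond_exp M (vimage_algebra (space M) (\<lambda>\<omega>. binned_model M X f B I (X \<omega>)) borel)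
                      (\<lambda>\<omega>. f (X \<omega>)) \<omega> = binned_model M X f B I (X \<omega>)"
proof (rule real_cond_exp_eq_average_on_level_sets)
  show "(\<lambda>\<omega>. bin_index B I (f (X \<omega>))) \<in> measurable M (count_space UNIV)"
    using measurable_bin_index[OF assms] .
  show "finite ((\<lambda>\<omega>. bin_index B I (f (X \<omega>))) ` space M)"
    using bin_index_spec(1)[OF assms(1) f(2)] by (auto intro: finite_subset[of _ "{..<B}"])
  show "integrable M (\<lambda>\<omega>. f (X \<omega>))"
    using f by (intro integrable_const_bound[where B=1] AE_I2) auto
qed (simp add: binned_model_eq_average_on[where f=f and X=X, OF assms(1) f(2)])

theorem mainTheorem3:
  fixes M :: "'a measure" and S :: "'x measure"
    and X :: "'a \<Rightarrow> 'x" and Y :: "'a \<Rightarrow> real" and f :: "'x \<Rightarrow> real"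
    and p :: real and B :: nat and I :: "nat \<Rightarrow> real set"
  assumes "prob_space M"
    and "X \<in> measurable M S"
    and "Y \<in> borel_measurable M"
    and "\<And>\<omega>. \<omega> \<in> space M \<Longrightarrow> Y \<omega> \<in> {0, 1}"
    and "f \<in> borel_measurable S"
    and "\<And>x. x \<in> space S \<Longrightarrow> f x \<in> {0..1}"
    and "p \<ge> 1"
    and "binning_scheme B I"
  shows "lp_CE M X Y p (binned_model M X f B I) \<le> lp_CE M X Y p f"
proof -
  interpret prob_space M by fact
  have f_meas: "(\<lambda>\<omega>. f (X \<omega>)) \<in> borel_measurable M"
    using measurable_compose[OF assms(2,5)] .
  have f01: "f (X \<omega>) \<in> {0..1}" if "\<omega> \<in> space M" for \<omega>
    using assms(6) measurable_space[OF assms(2) that] .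
  have Y01: "Y \<omega> \<in> {0..1}" if "\<omega> \<in> space M" for \<omega>
    using assms(4)[OF that] by auto
  show ?thesis
    by (rule lp_CE_le_of_real_cond_exp[where f=f and X=X, OF assms(1,3) Y01 f_meas f01
          sets_vimage_algebra_binned_model_subset[where f=f and X=X, OF assms(8) f01]
          real_cond_exp_binned_model[where f=f and X=X, OF assms(8) f_meas f01] assms(7)])
qed

end
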